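(* Let $k\geq 3$ and let $G$ be a diregular $(2,k,+3)$-digraph. Let $u,v$ be distinct vertices with exactly one common out-neighbour $u_2$, and write $N^+(u)=\{u_1,u_2\}$, $N^+(v)=\{v_1,u_2\}$. Then $v_1\in N^{k-1}(u_1)\cup O(u)$ and $u_1\in N^{k-1}(v_1)\cup O(v)$.
   Context: A digraph is $k$-geodetic if for every ordered pair of vertices $x,y$ there is at most one directed path from $x$ to $y$ of length at most $k$ (the trivial path counts). A diregular $(2,k,+3)$-digraph is a $k$-geodetic digraph of order $1+2+\dots+2^k+3$ in which every vertex has in- and out-degree $2$. $N^+(x)$ is the set of out-neighbours of $x$; $N^l(x)$ is the set of end-vertices of directed paths of length $l$ starting at $x$. $d(x,y)$ is the directed distance; $O(x)=\{y: d(x,y)\geq k+1\}$ is the outlier set of $x$. *)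

theory Defs
  imports Main "HOL-Library.Extended_Nat"
begin

text \<open>A walk is a nonempty list of vertices with consecutive
  vertices joined by arcs; its length is the number of arcs.\<close>

definition is_walk :: "('a \<times> 'a) set \<Rightarrow> 'a list \<Rightarrow> bool" where
  "is_walk A xs \<longleftrightarrow> xs \<noteq> [] \<and> (\<forall>i. Suc i < length xs \<longrightarrow> (xs ! i, xs ! Suc i) \<in> A)"

definition walk_from_to :: "('a \<times> 'a) set \<Rightarrow> 'a \<Rightarrow> 'a \<Rightarrow> 'a list \<Rightarrow> bool" where
  "walk_from_to A x y xs \<longleftrightarrow> is_walk A xs \<and> hd xs = x \<and> last xs = y"

definition out_nbrs :: "('a \<times> 'a) set \<Rightarrow> 'a \<Rightarrow> 'a set" where
  "out_nbrs A x = {y. (x, y) \<in> A}"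

definition in_nbrs :: "('a \<times> 'a) set \<Rightarrow> 'a \<Rightarrow> 'a set" where
  "in_nbrs A x = {y. (y, x) \<in> A}"

definition N_l :: "('a \<times> 'a) set \<Rightarrow> nat \<Rightarrow> 'a \<Rightarrow> 'a set" where
  "N_l A l x = {y. \<exists>xs. walk_from_to A x y xs \<and> length xs = Suc l}"

text \<open>Directed distance (infinite if y is unreachable from x).\<close>
definition ddist :: "('a \<times> 'a) set \<Rightarrow> 'a \<Rightarrow> 'a \<Rightarrow> enat" where
  "ddist A x y = (INF l \<in> {l. y \<in> N_l A l x}. enat l)"

definition outlier_set :: "'a set \<Rightarrow> ('a \<times> 'a) set \<Rightarrow> nat \<Rightarrow> 'a \<Rightarrow> 'a set" where
  "outlier_set V A k x = {y \<in> V. ddist A x y \<ge> enat (k + 1)}"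

definition digraph :: "'a set \<Rightarrow> ('a \<times> 'a) set \<Rightarrow> bool" where
  "digraph V A \<longleftrightarrow> finite V \<and> A \<subseteq> V \<times> V"

text \<open>k-geodetic: for all x, y at most one walk of length \<le> k from x to y
  (the trivial walk counts).\<close>
definition k_geodetic :: "'a set \<Rightarrow> ('a \<times> 'a) set \<Rightarrow> nat \<Rightarrow> bool" where
  "k_geodetic V A k \<longleftrightarrow> (\<forall>x\<in>V. \<forall>y\<in>V. \<forall>p q.
      walk_from_to A x y p \<and> length p \<le> Suc k \<and>
      walk_from_to A x y q \<and> length q \<le> Suc k \<longrightarrow> p = q)"

definition diregular :: "'a set \<Rightarrow> ('a \<times> 'a) set \<Rightarrow> nat \<Rightarrow> bool" where
  "diregular V A d \<longleftrightarrow> (\<forall>x\<in>V. card (out_nbrs A x) = d \<and> card (in_nbrs A x) = d)"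

definition two_k_plus3_digraph :: "'a set \<Rightarrow> ('a \<times> 'a) set \<Rightarrow> nat \<Rightarrow> bool" where
  "two_k_plus3_digraph V A k \<longleftrightarrow> digraph V A \<and> k_geodetic V A k \<and> diregular V A 2 \<and>
      card V = (\<Sum>i\<le>k. 2 ^ i) + 3"

end

theory Submission
  imports Defs
begin

text \<open>
  Suppose \<open>v\<^sub>1\<close> is neither in \<open>N\<^sup>k\<^sup>-\<^sup>1(u\<^sub>1)\<close> nor an outlier of \<open>u\<close>. A route from \<open>u\<close> to \<open>v\<^sub>1\<close>
  through \<open>u\<^sub>2\<close> would give two short walks from \<open>v\<close> to \<open>v\<^sub>1\<close>, so \<open>v\<^sub>1 \<in> N\<^sup>j(u\<^sub>1)\<close> with
  \<open>1 \<le> j \<le> k - 2\<close>. Pick \<open>y \<in> N\<^sup>k\<^sup>-\<^sup>j\<^sup>-\<^sup>2(v\<^sub>1)\<close>. Each of the four vertices of \<open>N\<^sup>2(y)\<close> lies in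
  \<open>N\<^sup>k(u\<^sub>1)\<close> and in \<open>N\<^sup>k\<^sup>-\<^sup>j(v\<^sub>1)\<close>, so by \<open>k\<close>-geodecity it is reached from \<open>u\<close> within \<open>k\<close> steps
  neither via \<open>u\<^sub>1\<close> nor via \<open>u\<^sub>2\<close>; hence \<open>N\<^sup>2(y) = {u} \<union> O(u)\<close> by counting. Since
  \<open>u \<in> N\<^sup>2(y)\<close>, the walk \<open>v v\<^sub>1 \<dots> y \<dots> u u\<^sub>2\<close> of length \<open>k - j + 2\<close> competes with the arc
  \<open>v u\<^sub>2\<close>, forcing \<open>j = 1\<close>. Then \<open>u\<^sub>1 v\<^sub>1\<close> is an arc, which makes \<open>v\<close> an outlier of \<open>u\<close>;
  so \<open>v \<in> N\<^sup>2(y)\<close>, closing a walk of length \<open>k\<close> from \<open>v\<close> to itself.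
\<close>

lemma is_walk_Cons_Cons:
  "is_walk A (x # y # p) \<longleftrightarrow> (x, y) \<in> A \<and> is_walk A (y # p)"
  unfolding is_walk_def by (auto simp: nth_Cons split: nat.split)

lemma N_l_iff: "z \<in> N_l A l x \<longleftrightarrow> (\<exists>q. is_walk A (x # q) \<and> last (x # q) = z \<and> length q = l)"
proof
  assume "z \<in> N_l A l x"
  then obtain xs where xs: "is_walk A xs" "hd xs = x" "last xs = z" "length xs = Suc l"
    unfolding N_l_def walk_from_to_def by blast
  then have "xs = x # tl xs"
    by (metis hd_Cons_tl list.size(3) nat.distinct(1))
  with xs show "\<exists>q. is_walk A (x # q) \<and> last (x # q) = z \<and> length q = l"
    by (metis diff_Suc_1 length_tl)
next
  assume "\<exists>q. is_walk A (x # q) \<and> last (x # q) = z \<and> length q = l"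
  then obtain q where "is_walk A (x # q)" "last (x # q) = z" "length q = l"
    by blast
  then show "z \<in> N_l A l x"
    unfolding N_l_def walk_from_to_def by (intro CollectI exI[of _ "x # q"]) simp
qed

lemma N_l_0: "N_l A 0 x = {x}"
  by (auto simp: N_l_iff is_walk_def)

lemma N_l_Suc: "N_l A (Suc l) x = (\<Union>y\<in>out_nbrs A x. N_l A l y)"
proof (intro set_eqI iffI)
  fix z assume "z \<in> N_l A (Suc l) x"
  then obtain q where q: "is_walk A (x # q)" "last (x # q) = z" "length q = Suc l"
    by (auto simp: N_l_iff)
  then obtain y q' where "q = y # q'"
    by (cases q) auto
  with q have "y \<in> out_nbrs A x" "z \<in> N_l A l y"
    unfolding N_l_iff out_nbrs_def by (auto simp: is_walk_Cons_Cons intro!: exI[of _ q'])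
  then show "z \<in> (\<Union>y\<in>out_nbrs A x. N_l A l y)"
    by blast
next
  fix z assume "z \<in> (\<Union>y\<in>out_nbrs A x. N_l A l y)"
  then obtain y q where "(x, y) \<in> A" "is_walk A (y # q)" "last (y # q) = z" "length q = l"
    by (auto simp: N_l_iff out_nbrs_def)
  then show "z \<in> N_l A (Suc l) x"
    unfolding N_l_iff by (intro exI[of _ "y # q"]) (simp add: is_walk_Cons_Cons)
qed

lemma N_l_1: "y \<in> N_l A 1 x \<longleftrightarrow> (x, y) \<in> A"
  by (simp add: N_l_Suc N_l_0 out_nbrs_def)

lemma N_l_add: "y \<in> N_l A i x \<Longrightarrow> z \<in> N_l A j y \<Longrightarrow> z \<in> N_l A (i + j) x"
  by (induction i arbitrary: x) (auto simp: N_l_0 N_l_Suc)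

lemma outlier_set_eq: "outlier_set V A k x = V - (\<Union>i\<le>k. N_l A i x)"
proof -
  have "enat (k + 1) \<le> ddist A x y \<longleftrightarrow> (\<forall>l\<le>k. y \<notin> N_l A l x)" for y
    by (force simp: ddist_def le_INF_iff not_less_eq_eq)
  then show ?thesis
    by (auto simp: outlier_set_def)
qed

lemma outlier_set_reached_via_out_nbr:
  assumes "z \<in> V" "z \<notin> outlier_set V A k x" "z \<noteq> x"
  obtains w i where "(x, w) \<in> A" "i < k" "z \<in> N_l A i w"
proof -
  obtain l where "l \<le> k" "z \<in> N_l A l x"
    using assms(1,2) by (auto simp: outlier_set_eq)
  moreover have "l \<noteq> 0"
    using \<open>z \<in> N_l A l x\<close> assms(3) by (metis N_l_0 singletonD)
  ultimately obtain i where "l = Suc i" "i < k" "z \<in> N_l A (Suc i) x"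
    by (metis Suc_le_lessD not0_implies_Suc)
  then show ?thesis
    using that by (auto simp: N_l_Suc out_nbrs_def)
qed

locale geodetic_digraph =
  fixes V :: "'a set" and A :: "('a \<times> 'a) set" and k :: nat
  assumes digraph: "digraph V A" and geodetic: "k_geodetic V A k"
begin

lemma finite_V: "finite V"
  using digraph by (simp add: digraph_def)

lemma N_l_subset_V: "x \<in> V \<Longrightarrow> N_l A l x \<subseteq> V"
  using digraph
  by (induction l arbitrary: x) (auto simp: N_l_0 N_l_Suc digraph_def out_nbrs_def)

lemma walk_unique:
  assumes "x \<in> V" "is_walk A (x # p)" "is_walk A (x # q)" "last (x # p) = last (x # q)"
    and "length p \<le> k" "length q \<le> k"
  shows "p = q"
proof -
  have "last (x # p) \<in> N_l A (length p) x"
    using assms(2) unfolding N_l_iff by blast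
  then have "last (x # p) \<in> V"
    using N_l_subset_V[OF assms(1)] by blast
  moreover have "walk_from_to A x (last (x # p)) (x # p)" "walk_from_to A x (last (x # p)) (x # q)"
    using assms(2-4) by (simp_all add: walk_from_to_def)
  moreover have "length (x # p) \<le> Suc k" "length (x # q) \<le> Suc k"
    using assms(5,6) by simp_all
  ultimately have "x # p = x # q"
    using geodetic assms(1) unfolding k_geodetic_def by blast
  then show ?thesis
    by simp
qed

lemma N_l_length_unique:
  assumes "x \<in> V" "y \<in> N_l A i x" "y \<in> N_l A j x" "i \<le> k" "j \<le> k"
  shows "i = j"
proof -
  obtain p q where "is_walk A (x # p)" "last (x # p) = y" "length p = i"
    and "is_walk A (x # q)" "last (x # q) = y" "length q = j"
    using assms(2,3) by (auto simp: N_l_iff)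
  then have "p = q"
    using walk_unique[OF assms(1)] assms(4,5) by simp
  then show ?thesis
    using \<open>length p = i\<close> \<open>length q = j\<close> by simp
qed

lemma out_nbrs_eq_if_common_N_l:
  assumes "x \<in> V" "(x, a) \<in> A" "(x, b) \<in> A" "y \<in> N_l A i a" "y \<in> N_l A j b" "i < k" "j < k"
  shows "a = b"
proof -
  obtain p q where "is_walk A (a # p)" "last (a # p) = y" "length p = i"
    and "is_walk A (b # q)" "last (b # q) = y" "length q = j"
    using assms(4,5) by (auto simp: N_l_iff)
  then have "a # p = b # q"
    using walk_unique[OF assms(1), of "a # p" "b # q"] assms(2,3,6,7)
    by (simp add: is_walk_Cons_Cons)
  then show ?thesis
    by simp
qed

lemma card_N_l:
  assumes out_degree: "\<And>y. y \<in> V \<Longrightarrow> card (out_nbrs A y) = d"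
  shows "x \<in> V \<Longrightarrow> l \<le> k \<Longrightarrow> card (N_l A l x) = d ^ l"
proof (induction l arbitrary: x)
  case 0
  then show ?case
    by (simp add: N_l_0)
next
  case (Suc l)
  have out_V: "out_nbrs A x \<subseteq> V"
    using digraph by (auto simp: digraph_def out_nbrs_def)
  have "card (\<Union>y\<in>out_nbrs A x. N_l A l y) = (\<Sum>y\<in>out_nbrs A x. card (N_l A l y))"
  proof (rule card_UN_disjoint)
    show "finite (out_nbrs A x)"
      using finite_subset[OF out_V finite_V] .
    show "\<forall>y\<in>out_nbrs A x. finite (N_l A l y)"
      using out_V N_l_subset_V finite_V by (meson finite_subset subsetD)
    show "\<forall>a\<in>out_nbrs A x. \<forall>b\<in>out_nbrs A x. a \<noteq> b \<longrightarrow> N_l A l a \<inter> N_l A l b = {}"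
      using out_nbrs_eq_if_common_N_l[OF Suc.prems(1)] Suc.prems(2)
      by (fastforce simp: out_nbrs_def)
  qed
  also have "\<dots> = (\<Sum>y\<in>out_nbrs A x. d ^ l)"
    using Suc out_V by (intro sum.cong) auto
  also have "\<dots> = d ^ Suc l"
    using out_degree[OF Suc.prems(1)] by simp
  finally show ?case
    by (simp add: N_l_Suc)
qed

lemma card_outlier_set:
  assumes out_degree: "\<And>y. y \<in> V \<Longrightarrow> card (out_nbrs A y) = d"
    and card_V: "card V = (\<Sum>i\<le>k. d ^ i) + e" and "x \<in> V"
  shows "card (outlier_set V A k x) = e"
proof -
  have ball_V: "(\<Union>i\<le>k. N_l A i x) \<subseteq> V"
    using N_l_subset_V[OF \<open>x \<in> V\<close>] by blast
  have "card (\<Union>i\<le>k. N_l A i x) = (\<Sum>i\<le>k. card (N_l A i x))"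
  proof (rule card_UN_disjoint)
    show "\<forall>i\<in>{..k}. finite (N_l A i x)"
      using ball_V finite_V by (meson UN_subset_iff finite_subset)
    show "\<forall>i\<in>{..k}. \<forall>j\<in>{..k}. i \<noteq> j \<longrightarrow> N_l A i x \<inter> N_l A j x = {}"
      using N_l_length_unique[OF \<open>x \<in> V\<close>] by fastforce
  qed simp
  also have "\<dots> = (\<Sum>i\<le>k. d ^ i)"
    using card_N_l[OF out_degree \<open>x \<in> V\<close>] by simp
  finally show ?thesis
    using card_V card_Diff_subset[OF finite_subset[OF ball_V finite_V] ball_V]
    by (simp add: outlier_set_eq)
qed

end

locale two_k_plus3_common_out_nbr =
  fixes V :: "'a set" and A :: "('a \<times> 'a) set" and k :: nat and u v u1 u2 v1 :: 'a
  assumes k_ge_3: "k \<ge> 3"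
    and two_k_plus3: "two_k_plus3_digraph V A k"
    and u_V: "u \<in> V" and v_V: "v \<in> V" and u_ne_v: "u \<noteq> v"
    and common_out_nbr: "out_nbrs A u \<inter> out_nbrs A v = {u2}"
    and out_u: "out_nbrs A u = {u1, u2}"
    and out_v: "out_nbrs A v = {v1, u2}"
begin

sublocale geodetic_digraph V A k
  using two_k_plus3 by unfold_locales (simp_all add: two_k_plus3_digraph_def)

lemma out_degree_2: "y \<in> V \<Longrightarrow> card (out_nbrs A y) = 2"
  using two_k_plus3 by (simp add: two_k_plus3_digraph_def diregular_def)

lemma card_outlier_set_3: "x \<in> V \<Longrightarrow> card (outlier_set V A k x) = 3"
  using card_outlier_set[OF out_degree_2] two_k_plus3 by (simp add: two_k_plus3_digraph_def)

lemma arcs: "(u, u1) \<in> A" "(u, u2) \<in> A" "(v, v1) \<in> A" "(v, u2) \<in> A"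
  using out_u out_v by (auto simp: out_nbrs_def)

lemma out_nbrs_distinct: "u1 \<noteq> u2" "v1 \<noteq> u2" "u1 \<noteq> v1"
proof -
  show "u1 \<noteq> u2" "v1 \<noteq> u2"
    using out_degree_2[OF u_V] out_degree_2[OF v_V] out_u out_v by auto
  then show "u1 \<noteq> v1"
    using common_out_nbr out_u out_v by auto
qed

lemma out_nbrs_V: "u1 \<in> V" "u2 \<in> V" "v1 \<in> V"
  using arcs digraph by (auto simp: digraph_def)

lemma v1_ne_u: "v1 \<noteq> u"
proof
  assume "v1 = u"
  then have "u2 \<in> N_l A (1 + 1) v"
    using N_l_add arcs by (metis N_l_1)
  then show False
    using N_l_length_unique[OF v_V _ N_l_1[THEN iffD2, OF arcs(4)]] k_ge_3 by fastforce
qed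

lemma v1_notin_N_l_u2: "i < k \<Longrightarrow> v1 \<notin> N_l A i u2"
  using out_nbrs_eq_if_common_N_l[OF v_V arcs(3,4), of v1 0 i] out_nbrs_distinct(2) k_ge_3
  by (auto simp: N_l_0)

lemma v1_near_u1:
  assumes far: "v1 \<notin> N_l A (k - 1) u1 \<union> outlier_set V A k u"
  obtains j where "v1 \<in> N_l A j u1" "1 \<le> j" "j + 2 \<le> k"
proof -
  obtain w i where w: "(u, w) \<in> A" "i < k" "v1 \<in> N_l A i w"
    using far outlier_set_reached_via_out_nbr[OF out_nbrs_V(3) _ v1_ne_u] by blast
  have "w \<noteq> u2"
    using v1_notin_N_l_u2 w(2,3) by blast
  then have "v1 \<in> N_l A i u1"
    using w out_u by (auto simp: out_nbrs_def)
  moreover have "i \<noteq> 0"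
    using \<open>v1 \<in> N_l A i u1\<close> out_nbrs_distinct(3) by (metis N_l_0 singletonD)
  moreover have "i \<noteq> k - 1"
    using \<open>v1 \<in> N_l A i u1\<close> far by auto
  ultimately show ?thesis
    using that w(2) by simp
qed

lemma arc_u1_v1_imp_v_outlier:
  assumes "(u1, v1) \<in> A"
  shows "v \<in> outlier_set V A k u"
proof (rule ccontr)
  assume "v \<notin> outlier_set V A k u"
  then obtain w i where w: "(u, w) \<in> A" "i < k" "v \<in> N_l A i w"
    using outlier_set_reached_via_out_nbr[OF v_V _ u_ne_v[symmetric]] by blast
  moreover have "w = u1 \<or> w = u2"
    using w(1) out_u by (auto simp: out_nbrs_def)
  ultimately consider "v \<in> N_l A i u1" | "v \<in> N_l A i u2"
    by blast
  then show False
  proof cases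
    case 1
    show False
    proof (cases "i + 2 \<le> k")
      case True
      have "u2 \<in> N_l A (1 + i + 1) u"
        using N_l_add[OF N_l_add[OF N_l_1[THEN iffD2, OF arcs(1)] 1] N_l_1[THEN iffD2, OF arcs(4)]] .
      then show False
        using N_l_length_unique[OF u_V _ N_l_1[THEN iffD2, OF arcs(2)]] True by fastforce
    next
      case False
      have "v1 \<in> N_l A (i + 1) u1"
        using N_l_add[OF 1 N_l_1[THEN iffD2, OF arcs(3)]] .
      then show False
        using N_l_length_unique[OF out_nbrs_V(1) _ N_l_1[THEN iffD2, OF assms]] False w(2) k_ge_3
        by fastforce
    qed
  next
    case 2
    have "u2 \<in> N_l A (i + 1) u2"
      using N_l_add[OF 2 N_l_1[THEN iffD2, OF arcs(4)]] .
    moreover have "u2 \<in> N_l A 0 u2"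
      by (simp add: N_l_0)
    ultimately show False
      using N_l_length_unique[OF out_nbrs_V(2)] w(2) by fastforce
  qed
qed

lemma N_l_2_eq_outliers:
  assumes j: "v1 \<in> N_l A j u1" "1 \<le> j" "j + 2 \<le> k" and y: "y \<in> N_l A (k - j - 2) v1"
  shows "N_l A 2 y = insert u (outlier_set V A k u)"
proof (rule card_seteq)
  show "finite (insert u (outlier_set V A k u))"
    using finite_V by (simp add: outlier_set_def)
  show "N_l A 2 y \<subseteq> insert u (outlier_set V A k u)"
  proof
    fix z assume "z \<in> N_l A 2 y"
    have "k - j - 2 + 2 = k - j" "j + (k - j) = k"
      using j(3) by linarith+
    then have z_v1: "z \<in> N_l A (k - j) v1" and z_u1: "z \<in> N_l A k u1"
      using N_l_add[OF y \<open>z \<in> N_l A 2 y\<close>] N_l_add[OF j(1)] by metis+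
    have "z \<in> V"
      using z_v1 N_l_subset_V[OF out_nbrs_V(3)] by blast
    show "z \<in> insert u (outlier_set V A k u)"
    proof (rule ccontr)
      assume "z \<notin> insert u (outlier_set V A k u)"
      then obtain w i where w: "(u, w) \<in> A" "i < k" "z \<in> N_l A i w"
        using outlier_set_reached_via_out_nbr[OF \<open>z \<in> V\<close>] by blast
      have "w \<noteq> u1"
      proof
        assume "w = u1"
        then show False
          using N_l_length_unique[OF out_nbrs_V(1) z_u1, of i] w(2,3) by simp
      qed
      moreover have "w \<noteq> u2"
      proof
        assume "w = u2"
        then show False
          using out_nbrs_eq_if_common_N_l[OF v_V arcs(3,4) z_v1, of i] out_nbrs_distinct(2) w(2,3) j(2)
          by simp
      qed
      ultimately show False
        using w(1) out_u by (auto simp: out_nbrs_def)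
    qed
  qed
  have "y \<in> V"
    using y N_l_subset_V[OF out_nbrs_V(3)] by blast
  then show "card (insert u (outlier_set V A k u)) \<le> card (N_l A 2 y)"
    using card_insert_le_m1[of 4 "outlier_set V A k u" u] card_outlier_set_3[OF u_V]
      card_N_l[OF out_degree_2 \<open>y \<in> V\<close>, of 2] k_ge_3 by simp
qed

lemma v1_in_N_l_or_outlier: "v1 \<in> N_l A (k - 1) u1 \<union> outlier_set V A k u"
proof (rule ccontr)
  assume "v1 \<notin> N_l A (k - 1) u1 \<union> outlier_set V A k u"
  then obtain j where j: "v1 \<in> N_l A j u1" "1 \<le> j" "j + 2 \<le> k"
    by (rule v1_near_u1)
  have "card (N_l A (k - j - 2) v1) \<noteq> 0"
    using card_N_l[OF out_degree_2 out_nbrs_V(3), of "k - j - 2"] by simp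
  then obtain y where y: "y \<in> N_l A (k - j - 2) v1"
    by (metis card.empty ex_in_conv)
  note N_l_2_y = N_l_2_eq_outliers[OF j y]
  have v_v1: "v1 \<in> N_l A 1 v"
    using N_l_1[THEN iffD2, OF arcs(3)] .
  have "u \<in> N_l A 2 y" "u2 \<in> N_l A 1 u" "u2 \<in> N_l A 1 v"
    using N_l_2_y N_l_1[THEN iffD2, OF arcs(2)] N_l_1[THEN iffD2, OF arcs(4)] by auto
  then have v_u2: "u2 \<in> N_l A (1 + (k - j - 2) + 2 + 1) v"
    using N_l_add[OF N_l_add[OF N_l_add[OF v_v1 y]]] by blast
  have "j = 1"
  proof (rule ccontr)
    assume "j \<noteq> 1"
    then have "1 + (k - j - 2) + 2 + 1 \<le> k"
      using j(2,3) by linarith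
    then have "1 + (k - j - 2) + 2 + 1 = 1"
      using N_l_length_unique[OF v_V v_u2 \<open>u2 \<in> N_l A 1 v\<close>] k_ge_3 by linarith
    then show False
      by linarith
  qed
  then have "(u1, v1) \<in> A"
    using j(1) N_l_1 by metis
  then have "v \<in> N_l A 2 y"
    using N_l_2_y arc_u1_v1_imp_v_outlier by blast
  then have v_cycle: "v \<in> N_l A (1 + (k - j - 2) + 2) v"
    using N_l_add[OF N_l_add[OF v_v1 y]] by blast
  have "v \<in> N_l A 0 v"
    by (simp add: N_l_0)
  moreover have "1 + (k - j - 2) + 2 \<le> k"
    using \<open>j = 1\<close> k_ge_3 by linarith
  ultimately have "1 + (k - j - 2) + 2 = 0"
    using N_l_length_unique[OF v_V v_cycle] by blast
  then show False
    by linarith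
qed

end

theorem corollary2:
  fixes V :: "'a set" and A :: "('a \<times> 'a) set" and k :: nat
    and u v u1 u2 v1 :: 'a
  assumes "k \<ge> 3"
    and "two_k_plus3_digraph V A k"
    and "u \<in> V" and "v \<in> V" and "u \<noteq> v"
    and "out_nbrs A u \<inter> out_nbrs A v = {u2}"
    and "out_nbrs A u = {u1, u2}"
    and "out_nbrs A v = {v1, u2}"
  shows "v1 \<in> N_l A (k - 1) u1 \<union> outlier_set V A k u
       \<and> u1 \<in> N_l A (k - 1) v1 \<union> outlier_set V A k v"
proof
  interpret two_k_plus3_common_out_nbr V A k u v u1 u2 v1
    using assms by unfold_locales
  show "v1 \<in> N_l A (k - 1) u1 \<union> outlier_set V A k u"
    by (rule v1_in_N_l_or_outlier)
next
  interpret two_k_plus3_common_out_nbr V A k v u v1 u2 u1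
    using assms by unfold_locales auto
  show "u1 \<in> N_l A (k - 1) v1 \<union> outlier_set V A k v"
    by (rule v1_in_N_l_or_outlier)
qed

end
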